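(* Let $V=[v_1,\dots,v_k],W=[w_1,\dots,w_k]\in\mathbb{R}^{d\times k}$, let $1\le i\le k$ with $w_i\ne0$, let $\gamma\in(0,1/2]$ and $R\ge2$. Let $\hat w_i=w_i/\|w_i\|_2$, $u=v_i-(v_i^\top\hat w_i)\hat w_i$, and, if $u\ne0$, $\hat u=u/\|u\|_2$. Let $\mathscr{E}=\mathscr{E}_{i,\gamma,R}$ be the event over $x\sim\mathcal{N}(0,I_d)$ that \[ 1\le\frac{x^\top\hat w_i}{R\sqrt{\log(1/\gamma)}}\le2\quad\text{and}\quad1\le\frac{x^\top\hat u}{2\sqrt{\log(1/\gamma)}}\le2, \] where, if $u=0$, the condition on $x^\top\hat u$ is omitted. Then $\Pr[\mathscr{E}]\ge\gamma^{28+6R^2}$. *)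

theory Defs
  imports "HOL-Analysis.Analysis" "HOL-Probability.Probability"
begin

definition std_gaussian :: "('d::finite) itself \<Rightarrow> (real^'d) measure" where
  "std_gaussian _ = distr (PiM UNIV (\<lambda>_::'d. density lborel std_normal_density))
                          borel (\<lambda>f. \<chi> j. f j)"

end

theory Submission
  imports Defs
begin

text \<open>The standard Gaussian measure is invariant under orthogonal maps. Since \<open>wh\<close> and \<open>uh\<close>
  are orthonormal, an orthogonal map sending them to two coordinate axes turns the event into a
  product of two independent one-dimensional events \<open>a \<le> Z \<le> 2 a\<close> with
  \<open>a = t sqrt (ln (1/\<gamma>))\<close>, for \<open>t = R\<close> and \<open>t = 2\<close>. Each has probability at least
  \<open>a \<phi>(2 a) = a \<gamma> powr (2 t\<^sup>2) / sqrt (2 \<pi>)\<close>, and this exceeds \<open>\<gamma> powr (2 t\<^sup>2 + 2)\<close>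
  because \<open>a \<ge> 1\<close> and \<open>\<gamma>\<^sup>2 \<le> 1/4\<close>.\<close>

section \<open>Rotation invariance of Lebesgue measure on \<open>real^'n\<close>\<close>

text \<open>The change-of-variables results of HOL-Analysis (\<open>measure_orthogonal_image\<close>) require a
  wellordered index type; an arbitrary finite index type is reduced to this copy of it by
  permuting coordinates.\<close>

typedef ('a::finite) ranked = "{..<CARD('a)}" morphisms rank unrank
  by (rule exI[of _ 0]) simp

instantiation ranked :: (finite) linorder
begin
definition "less_eq_ranked (x::'a ranked) (y::'a ranked) \<longleftrightarrow> rank x \<le> rank y"
definition "less_ranked (x::'a ranked) (y::'a ranked) \<longleftrightarrow> rank x < rank y"
instance by standard (auto simp: less_eq_ranked_def less_ranked_def rank_inject)
end

lemma UNIV_ranked: "(UNIV :: 'a::finite ranked set) = unrank ` {..<CARD('a)}"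
  by (metis type_definition.Abs_image type_definition_ranked)

instance ranked :: (finite) finite
  by standard (simp add: UNIV_ranked)

instance ranked :: (finite) wellorder
proof
  fix P :: "'a ranked \<Rightarrow> bool" and a :: "'a ranked"
  assume step: "\<And>x. (\<And>y. y < x \<Longrightarrow> P y) \<Longrightarrow> P x"
  have "rank x = n \<Longrightarrow> P x" for n x
    by (induction n arbitrary: x rule: less_induct) (metis step less_ranked_def)
  then show "P a" by blast
qed

lemma card_ranked: "CARD('a::finite ranked) = CARD('a)"
proof -
  have "inj_on (unrank :: nat \<Rightarrow> 'a ranked) {..<CARD('a)}"
    by (metis unrank_inverse inj_onI)
  then show ?thesis by (simp add: UNIV_ranked card_image)
qed

lemma bij_from_ranked: obtains f :: "'a::finite ranked \<Rightarrow> 'a" where "bij f"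
  using bij_betw_iff_card[of "UNIV :: 'a ranked set" "UNIV :: 'a set"] card_ranked by auto

lemma borel_measurable_linear:
  "linear f \<Longrightarrow> (f :: 'a::euclidean_space \<Rightarrow> 'b::euclidean_space) \<in> borel_measurable borel"
  by (simp add: borel_measurable_continuous_onI linear_continuous_on linear_linear)

lemma linear_permute_coords: "linear (\<lambda>x::real^'n. (\<chi> k. x $ \<sigma> k) :: real^'m)"
  by (rule linearI) (simp_all add: vec_eq_iff)

lemma norm_permute_coords:
  fixes \<sigma> :: "'m::finite \<Rightarrow> 'n::finite"
  assumes "bij \<sigma>"
  shows "norm ((\<chi> k. x $ \<sigma> k) :: real^'m) = norm (x :: real^'n)"
  using sum.reindex_bij_betw[OF assms, of "\<lambda>j. x $ j * x $ j"]
  by (simp add: norm_eq_sqrt_inner inner_vec_def)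

lemma prod_Basis_vec: "(\<Prod>b\<in>(Basis :: (real^'n) set). f b) = (\<Prod>j\<in>UNIV. f (axis j 1))"
proof -
  have Basis: "(Basis :: (real^'n) set) = range (\<lambda>j. axis j 1)"
    by (auto simp: Basis_vec_def)
  have "inj (\<lambda>j::'n. axis j (1::real))"
    by (auto intro!: injI simp: axis_eq_axis)
  then show ?thesis
    unfolding Basis by (simp add: prod.reindex)
qed

lemma emeasure_lborel_box_vec:
  assumes "\<And>j. l $ j \<le> u $ j"
  shows "emeasure lborel (box l u) = (\<Prod>j\<in>UNIV. ennreal (u $ j - l $ j))"
proof -
  have "\<forall>b\<in>Basis. l \<bullet> b \<le> u \<bullet> b"
    using assms by (auto simp: Basis_vec_def inner_axis)
  then show ?thesis
    using assms by (simp add: emeasure_lborel_box_eq prod_Basis_vec inner_axis prod_ennreal)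
qed

lemma lborel_distr_permute_coords:
  fixes \<sigma> :: "'m::finite \<Rightarrow> 'n::finite"
  assumes \<sigma>: "bij \<sigma>"
  shows "distr lborel borel (\<lambda>x::real^'n. (\<chi> k. x $ \<sigma> k) :: real^'m) = lborel"
proof (rule lborel_eqI[symmetric])
  let ?P = "\<lambda>x::real^'n. (\<chi> k. x $ \<sigma> k) :: real^'m"
  have [measurable]: "?P \<in> borel_measurable borel"
    by (rule borel_measurable_linear[OF linear_permute_coords])
  fix l u :: "real^'m"
  assume le: "\<And>b. b \<in> Basis \<Longrightarrow> l \<bullet> b \<le> u \<bullet> b"
  have lu: "l $ k \<le> u $ k" for k
    using le[of "axis k 1"] by (auto simp: Basis_vec_def inner_axis)
  let ?l = "(\<chi> j. l $ inv \<sigma> j) :: real^'n" and ?u = "(\<chi> j. u $ inv \<sigma> j) :: real^'n"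
  have "?P -` box l u = box ?l ?u"
    using \<sigma> by (auto simp: mem_box_cart bij_inv_eq_iff) (metis bij_inv_eq_iff \<sigma>)+
  then have "emeasure (distr lborel borel ?P) (box l u) = (\<Prod>j\<in>UNIV. ennreal (u $ inv \<sigma> j - l $ inv \<sigma> j))"
    using lu by (simp add: emeasure_distr emeasure_lborel_box_vec)
  also have "\<dots> = (\<Prod>k\<in>UNIV. ennreal (u $ k - l $ k))"
    using prod.reindex_bij_betw[OF bij_imp_bij_inv[OF \<sigma>], of "\<lambda>k. ennreal (u $ k - l $ k)"] by simp
  also have "\<dots> = emeasure lborel (box l u)"
    using lu by (simp add: emeasure_lborel_box_vec)
  finally show "emeasure (distr lborel borel ?P) (box l u) = (\<Prod>b\<in>Basis. (u - l) \<bullet> b)"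
    using le by (simp add: emeasure_lborel_box_eq)
qed simp

lemma lborel_distr_orthogonal_transformation_wellorder:
  fixes T :: "real^'n::{finite,wellorder} \<Rightarrow> real^'n::_"
  assumes T: "orthogonal_transformation T"
  shows "distr lborel borel T = lborel"
proof (rule lborel_eqI[symmetric])
  have [measurable]: "T \<in> borel_measurable borel"
    using T by (simp add: borel_measurable_linear orthogonal_transformation_linear)
  have inv_T: "orthogonal_transformation (inv T)"
    using T by (rule orthogonal_transformation_inv)
  fix l u :: "real^'n::{finite,wellorder}"
  assume le: "\<And>b. b \<in> Basis \<Longrightarrow> l \<bullet> b \<le> u \<bullet> b"
  have box: "box l u \<in> lmeasurable" by simp
  have preimage: "T -` box l u = inv T ` box l u"
    using T by (simp add: bij_vimage_eq_inv_image orthogonal_transformation_bij)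
  have "T -` box l u \<in> sets borel"
    using measurable_sets_borel[of T borel "box l u"] by simp
  then have "emeasure (distr lborel borel T) (box l u) = emeasure lebesgue (inv T ` box l u)"
    by (simp add: emeasure_distr emeasure_completion flip: preimage)
  also have "\<dots> = measure lebesgue (box l u)"
    using measurable_orthogonal_image[OF inv_T box] measure_orthogonal_image[OF inv_T box]
    by (simp add: emeasure_eq_measure2)
  also have "\<dots> = emeasure lborel (box l u)"
    by (simp add: emeasure_eq_measure2 emeasure_completion)
  finally show "emeasure (distr lborel borel T) (box l u) = (\<Prod>b\<in>Basis. (u - l) \<bullet> b)"
    using le by (simp add: emeasure_lborel_box_eq)
qed simp

lemma lborel_distr_orthogonal_transformation:
  fixes T :: "real^'n::finite \<Rightarrow> real^'n"
  assumes T: "orthogonal_transformation T"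
  shows "distr lborel borel T = lborel"
proof -
  obtain \<sigma> :: "'n ranked \<Rightarrow> 'n" where \<sigma>: "bij \<sigma>"
    using bij_from_ranked .
  define P where "P x = ((\<chi> k. x $ \<sigma> k) :: real^'n ranked)" for x :: "real^'n"
  define Q where "Q y = ((\<chi> k. y $ inv \<sigma> k) :: real^'n)" for y :: "real^'n ranked"
  have lin: "linear P" "linear Q" "linear T"
    unfolding P_def[abs_def] Q_def[abs_def]
    using T by (simp_all add: linear_permute_coords orthogonal_transformation_linear)
  then have [measurable]: "P \<in> borel_measurable borel" "Q \<in> borel_measurable borel"
      "T \<in> borel_measurable borel"
    by (simp_all add: borel_measurable_linear)
  have QP: "Q (P x) = x" for x
    using \<sigma> by (simp add: P_def Q_def vec_eq_iff bij_is_surj surj_f_inv_f)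
  have Q: "distr lborel borel Q = lborel"
    unfolding Q_def[abs_def] using \<sigma> by (simp add: lborel_distr_permute_coords bij_imp_bij_inv)
  define T' where "T' = P \<circ> T \<circ> Q"
  have "orthogonal_transformation T'"
    unfolding orthogonal_transformation T'_def
    using lin T \<sigma> bij_imp_bij_inv[OF \<sigma>]
    by (simp add: linear_compose P_def Q_def norm_permute_coords orthogonal_transformation)
  then have T': "distr lborel borel T' = lborel"
    by (rule lborel_distr_orthogonal_transformation_wellorder)
  have [measurable]: "T' \<in> borel_measurable borel"
    unfolding T'_def by simp
  have "distr lborel borel T = distr (distr lborel borel Q) borel T"
    by (simp add: Q)
  also have "\<dots> = distr lborel borel (Q \<circ> T')"
    using QP by (simp add: distr_distr T'_def comp_def)
  also have "\<dots> = distr (distr lborel borel T') borel Q"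
    by (simp add: distr_distr)
  finally show ?thesis
    by (simp add: T' Q)
qed

section \<open>The standard Gaussian measure\<close>

lemma borel_measurable_vec_lambda:
  assumes "\<And>j. sets (M j) = sets (borel :: real measure)"
  shows "(\<lambda>f. (\<chi> j. f j) :: real^'n::finite) \<in> borel_measurable (PiM UNIV M)"
proof -
  have "(\<lambda>f. f j) \<in> borel_measurable (PiM UNIV M)" for j
    using measurable_component_singleton[of j UNIV M]
      measurable_cong_sets[OF refl assms[of j], of "PiM UNIV M"]
    by simp
  then have "\<forall>b\<in>Basis. (\<lambda>f. (\<chi> j. f j) \<bullet> b) \<in> borel_measurable (PiM UNIV M)"
    by (simp add: Basis_vec_def inner_axis)
  then show ?thesis
    by (rule borel_measurable_euclidean_space[THEN iffD2])
qed

lemma distr_PiM_lborel_vec_lambda: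
  "distr (PiM UNIV (\<lambda>_. lborel)) borel (\<lambda>f. (\<chi> j. f j) :: real^'n::finite) = lborel"
proof (rule lborel_eqI[symmetric])
  interpret product_sigma_finite "\<lambda>_::'n. lborel :: real measure" ..
  have [measurable]: "(\<lambda>f. (\<chi> j. f j) :: real^'n) \<in> borel_measurable (PiM UNIV (\<lambda>_. lborel))"
    by (rule borel_measurable_vec_lambda) simp
  fix l u :: "real^'n"
  assume le: "\<And>b. b \<in> Basis \<Longrightarrow> l \<bullet> b \<le> u \<bullet> b"
  have lu: "l $ j \<le> u $ j" for j
    using le[of "axis j 1"] by (auto simp: Basis_vec_def inner_axis)
  have "(\<lambda>f. (\<chi> j. f j) :: real^'n) -` box l u \<inter> space (PiM UNIV (\<lambda>_. lborel))
      = PiE UNIV (\<lambda>j. {l $ j <..< u $ j})"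
    by (auto simp: mem_box_cart space_PiM PiE_iff)
  then have "emeasure (distr (PiM UNIV (\<lambda>_. lborel)) borel (\<lambda>f. (\<chi> j. f j) :: real^'n)) (box l u)
      = (\<Prod>j\<in>UNIV. emeasure lborel {l $ j <..< u $ j})"
    by (simp add: emeasure_distr emeasure_PiM)
  also have "\<dots> = emeasure lborel (box l u)"
    using lu by (simp add: emeasure_lborel_box_vec)
  finally show "emeasure (distr (PiM UNIV (\<lambda>_. lborel)) borel (\<lambda>f. (\<chi> j. f j) :: real^'n)) (box l u)
      = (\<Prod>b\<in>Basis. (u - l) \<bullet> b)"
    using le by (simp add: emeasure_lborel_box_eq)
qed simp

lemma indicator_PiE_UNIV:
  "(indicator (PiE UNIV A) x :: 'b::comm_semiring_1) = (\<Prod>j\<in>(UNIV :: 'i::finite set). indicator (A j) (x j))"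
proof (cases "x \<in> PiE UNIV A")
  case True
  then show ?thesis
    by (simp add: PiE_iff)
next
  case False
  then obtain j where "x j \<notin> A j"
    by (auto simp: PiE_iff)
  then have "indicator (A j) (x j) = (0 :: 'b)"
    by simp
  then have "(\<Prod>j\<in>UNIV. indicator (A j) (x j) :: 'b) = 0"
    by (intro prod_zero) auto
  with False show ?thesis
    by simp
qed

lemma PiM_density_lborel:
  fixes f :: "real \<Rightarrow> ennreal"
  assumes [measurable]: "f \<in> borel_measurable borel"
    and "sigma_finite_measure (density lborel f)"
  shows "PiM UNIV (\<lambda>_::'i::finite. density lborel f)
      = density (PiM UNIV (\<lambda>_. lborel)) (\<lambda>x. \<Prod>j\<in>UNIV. f (x j))"
proof -
  interpret D: product_sigma_finite "\<lambda>_::'i. density lborel f"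
    using assms(2) by (simp add: product_sigma_finite_def)
  interpret L: product_sigma_finite "\<lambda>_::'i. lborel :: real measure" ..
  show ?thesis
  proof (rule D.PiM_eqI[symmetric])
    fix A :: "'i \<Rightarrow> real set"
    assume "\<And>j. j \<in> UNIV \<Longrightarrow> A j \<in> sets (density lborel f)"
    then have A [measurable]: "A j \<in> sets borel" for j
      by simp
    have "PiE UNIV A \<in> sets (PiM UNIV (\<lambda>_::'i. lborel :: real measure))"
      by (intro sets_PiM_I_finite) auto
    then have "emeasure (density (PiM UNIV (\<lambda>_. lborel)) (\<lambda>x. \<Prod>j\<in>UNIV. f (x j))) (PiE UNIV A)
        = (\<integral>\<^sup>+ x. (\<Prod>j\<in>UNIV. f (x j)) * indicator (PiE UNIV A) x \<partial>PiM UNIV (\<lambda>_. lborel))"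
      by (subst emeasure_density) auto
    also have "\<dots> = (\<integral>\<^sup>+ x. (\<Prod>j\<in>UNIV. f (x j) * indicator (A j) (x j)) \<partial>PiM UNIV (\<lambda>_. lborel))"
      by (intro nn_integral_cong) (simp add: indicator_PiE_UNIV prod.distrib)
    also have "\<dots> = (\<Prod>j\<in>UNIV. \<integral>\<^sup>+ y. f y * indicator (A j) y \<partial>lborel)"
      using L.product_nn_integral_prod[where I=UNIV and f="\<lambda>j y. f y * indicator (A j) y"]
      by simp
    also have "\<dots> = (\<Prod>j\<in>UNIV. emeasure (density lborel f) (A j))"
      by (simp add: emeasure_density)
    finally show "emeasure (density (PiM UNIV (\<lambda>_. lborel)) (\<lambda>x. \<Prod>j\<in>UNIV. f (x j))) (PiE UNIV A)
        = (\<Prod>j\<in>UNIV. emeasure (density lborel f) (A j))" .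
  qed (simp_all cong: sets_PiM_cong)
qed

definition std_gaussian_density :: "real^'n::finite \<Rightarrow> real" where
  "std_gaussian_density x = (1 / sqrt (2 * pi)) ^ CARD('n) * exp (- (norm x)\<^sup>2 / 2)"

lemma prod_std_normal_density:
  "(\<Prod>j\<in>UNIV. std_normal_density (x $ j)) = std_gaussian_density (x :: real^'n::finite)"
proof -
  have "(\<Prod>j\<in>UNIV. std_normal_density (x $ j))
      = (1 / sqrt (2 * pi)) ^ CARD('n) * exp (\<Sum>j\<in>UNIV. - (x $ j)\<^sup>2 / 2)"
    by (simp only: std_normal_density_def prod.distrib prod_constant exp_sum finite_class.finite_UNIV)
  also have "(\<Sum>j\<in>UNIV. - (x $ j)\<^sup>2 / 2) = - (norm x)\<^sup>2 / 2"
    by (simp add: norm_vec_def L2_set_def sum_negf sum_divide_distrib sum_nonneg)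
  finally show ?thesis
    by (simp add: std_gaussian_density_def)
qed

lemma borel_measurable_std_gaussian_density [measurable]:
  "std_gaussian_density \<in> borel_measurable borel"
  unfolding std_gaussian_density_def[abs_def]
  by (intro borel_measurable_continuous_onI continuous_intros) auto

lemma std_gaussian_eq_density:
  "std_gaussian TYPE('n::finite) = density lborel (\<lambda>x::real^'n. ennreal (std_gaussian_density x))"
proof -
  let ?vec = "\<lambda>f. (\<chi> j. f j) :: real^'n"
  have [measurable]: "?vec \<in> borel_measurable (PiM UNIV (\<lambda>_::'n. lborel))"
    by (rule borel_measurable_vec_lambda) simp
  interpret N: real_distribution std_normal_distribution
    by (rule real_dist_normal_dist)
  have "PiM UNIV (\<lambda>_::'n. std_normal_distribution)
      = density (PiM UNIV (\<lambda>_. lborel)) (\<lambda>f. \<Prod>j\<in>UNIV. ennreal (std_normal_density (f j)))"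
    by (rule PiM_density_lborel) (simp_all add: N.sigma_finite_measure_axioms)
  also have "(\<lambda>f. \<Prod>j\<in>UNIV. ennreal (std_normal_density (f j)))
      = (\<lambda>f. ennreal (std_gaussian_density (?vec f)))"
    by (simp add: fun_eq_iff prod_ennreal flip: prod_std_normal_density)
  finally have "PiM UNIV (\<lambda>_::'n. std_normal_distribution)
      = density (PiM UNIV (\<lambda>_. lborel)) (\<lambda>f. ennreal (std_gaussian_density (?vec f)))" .
  then have "std_gaussian TYPE('n)
      = distr (density (PiM UNIV (\<lambda>_. lborel)) (\<lambda>f. ennreal (std_gaussian_density (?vec f)))) borel ?vec"
    by (simp add: std_gaussian_def)
  also have "\<dots>
      = density (distr (PiM UNIV (\<lambda>_. lborel)) borel ?vec) (\<lambda>x. ennreal (std_gaussian_density x))"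
    by (simp add: density_distr)
  finally show ?thesis
    by (simp add: distr_PiM_lborel_vec_lambda)
qed

lemma distr_std_gaussian_orthogonal_transformation:
  fixes T :: "real^'n::finite \<Rightarrow> real^'n"
  assumes T: "orthogonal_transformation T"
  shows "distr (std_gaussian TYPE('n)) borel T = std_gaussian TYPE('n)"
proof -
  have [measurable]: "T \<in> borel_measurable borel"
    using T by (simp add: borel_measurable_linear orthogonal_transformation_linear)
  have "std_gaussian_density (T x) = std_gaussian_density x" for x
    using T by (simp add: std_gaussian_density_def orthogonal_transformation)
  then have "distr (std_gaussian TYPE('n)) borel T
      = distr (density lborel (\<lambda>x. ennreal (std_gaussian_density (T x)))) borel T"
    by (simp add: std_gaussian_eq_density)
  also have "\<dots> = density (distr lborel borel T) (\<lambda>x. ennreal (std_gaussian_density x))"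
    by (simp add: density_distr)
  finally show ?thesis
    by (simp add: lborel_distr_orthogonal_transformation[OF T] std_gaussian_eq_density)
qed

lemma space_std_gaussian [simp]: "space (std_gaussian TYPE('n::finite)) = UNIV"
  by (simp add: std_gaussian_def)

lemma sets_std_gaussian [simp]: "sets (std_gaussian TYPE('n::finite)) = sets borel"
  by (simp add: std_gaussian_def)

lemma measure_std_gaussian_vimage_orthogonal_transformation:
  fixes T :: "real^'n::finite \<Rightarrow> real^'n"
  assumes T: "orthogonal_transformation T" and C: "C \<in> sets borel"
  shows "measure (std_gaussian TYPE('n)) (T -` C) = measure (std_gaussian TYPE('n)) C"
proof -
  have "T \<in> measurable (std_gaussian TYPE('n)) borel"
    using T by (simp add: measurable_cong_sets[OF sets_std_gaussian refl]
        borel_measurable_linear orthogonal_transformation_linear)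
  then have "measure (distr (std_gaussian TYPE('n)) borel T) C = measure (std_gaussian TYPE('n)) (T -` C)"
    using C by (simp add: measure_distr)
  then show ?thesis
    by (simp add: distr_std_gaussian_orthogonal_transformation[OF T])
qed

lemma borel_measurable_vec_nth [measurable]:
  "(\<lambda>x::real^'n::finite. x $ j) \<in> borel_measurable borel"
  by (intro borel_measurable_continuous_onI linear_continuous_on bounded_linear_vec_nth)

lemma measure_std_gaussian_coordinates:
  fixes J :: "'n::finite set"
  assumes A [measurable]: "\<And>j. A j \<in> sets borel"
  shows "measure (std_gaussian TYPE('n)) {x. \<forall>j\<in>J. x $ j \<in> A j}
      = (\<Prod>j\<in>J. measure std_normal_distribution (A j))"
proof -
  interpret N: real_distribution std_normal_distribution
    by (rule real_dist_normal_dist)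
  interpret finite_product_sigma_finite "\<lambda>_::'n. std_normal_distribution" UNIV
    by (simp add: finite_product_sigma_finite_def product_sigma_finite_def
        finite_product_sigma_finite_axioms_def N.sigma_finite_measure_axioms)
  let ?N = "PiM UNIV (\<lambda>_::'n. std_normal_distribution)"
  let ?vec = "\<lambda>f. (\<chi> j. f j) :: real^'n"
  let ?C = "{x::real^'n. \<forall>j\<in>J. x $ j \<in> A j}"
  have [measurable]: "?vec \<in> borel_measurable ?N"
    by (rule borel_measurable_vec_lambda) simp
  have "?C \<in> sets borel"
    by measurable
  then have "emeasure (std_gaussian TYPE('n)) ?C = emeasure ?N (?vec -` ?C \<inter> space ?N)"
    by (simp add: std_gaussian_def emeasure_distr)
  also have "?vec -` ?C \<inter> space ?N = PiE UNIV (\<lambda>j. if j \<in> J then A j else UNIV)"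
    by (auto simp: space_PiM PiE_iff split: if_splits)
  also have "emeasure ?N \<dots> = (\<Prod>j\<in>UNIV. emeasure std_normal_distribution (if j \<in> J then A j else UNIV))"
    using A by (intro measure_times) simp
  also have "\<dots> = ennreal (\<Prod>j\<in>J. measure std_normal_distribution (A j))"
    by (simp add: if_distrib prod.If_cases N.prob_space[simplified] N.emeasure_eq_measure prod_ennreal)
  finally show ?thesis
    by (simp add: measure_def prod_nonneg)
qed

section \<open>Projections onto orthonormal directions\<close>

lemma householder_reflection_exists:
  fixes a b :: "'a::real_inner"
  assumes "norm a = 1" and "norm b = 1"
  obtains H where "orthogonal_transformation H" "H a = b" "\<And>x. x \<bullet> a = x \<bullet> b \<Longrightarrow> H x = x"
proof (cases "a = b")
  case True
  then show ?thesis
    using that[of id] by (simp add: orthogonal_transformation_def linear_id)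
next
  case False
  define v where "v = a - b"
  define H where "H x = x - (2 * (x \<bullet> v) / (v \<bullet> v)) *\<^sub>R v" for x
  have v: "v \<bullet> v \<noteq> 0"
    using False by (simp add: v_def)
  have "linear H"
    unfolding H_def by (intro linearI) (simp_all add: inner_add_left algebra_simps add_divide_distrib)
  moreover have "H x \<bullet> H y = x \<bullet> y" for x y
    using v by (simp add: H_def inner_diff_left inner_diff_right inner_commute field_simps)
  ultimately have "orthogonal_transformation H"
    by (simp add: orthogonal_transformation_def)
  moreover have "v \<bullet> v = 2 * (a \<bullet> v)"
    using assms by (simp add: v_def inner_diff_left inner_diff_right inner_commute norm_eq_1)
  then have "H a = b"
    using v by (simp add: H_def v_def)
  moreover have "H x = x" if "x \<bullet> a = x \<bullet> b" for x
    using that by (simp add: H_def v_def inner_diff_right)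
  ultimately show ?thesis
    using that by blast
qed

lemma orthonormal_pair_to_axes:
  fixes w u :: "real^'n::finite"
  assumes w: "norm w = 1" and u: "norm u = 1" and wu: "w \<bullet> u = 0"
  obtains T and j1 j2 :: 'n
  where "orthogonal_transformation T" "T w = axis j1 (1::real)" "T u = axis j2 1" "j1 \<noteq> j2"
proof -
  txt \<open>Rotate \<open>w\<close> onto an axis, then reflect the image of \<open>u\<close> onto a second axis; the
    reflection fixes the first axis because that image is orthogonal to it.\<close>
  fix j1 :: 'n
  obtain T1 where T1: "orthogonal_transformation T1" "T1 w = axis j1 (1::real)"
    using orthogonal_transformation_exists_1[of w "axis j1 1"] w by auto
  have unit: "norm (T1 u) = 1"
    using T1(1) u by (simp add: orthogonal_transformation)
  have "T1 u $ j1 = T1 u \<bullet> T1 w"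
    by (simp add: T1(2) inner_axis)
  also have "\<dots> = 0"
    using T1(1) wu by (simp add: orthogonal_transformation_def inner_commute)
  finally have j1: "T1 u $ j1 = 0" .
  obtain j2 where "T1 u $ j2 \<noteq> 0"
    using unit by (metis norm_zero vec_eq_iff zero_index zero_neq_one)
  with j1 have "j1 \<noteq> j2"
    by auto
  obtain H where H: "orthogonal_transformation H" "H (T1 u) = axis j2 1"
      "\<And>x. x \<bullet> T1 u = x \<bullet> axis j2 1 \<Longrightarrow> H x = x"
    using householder_reflection_exists[OF unit, of "axis j2 1"] by auto
  have "H (axis j1 1) = axis j1 1"
  proof (rule H(3))
    have "axis j1 1 \<bullet> T1 u = 0"
      using j1 by (simp add: inner_commute[of "axis j1 1"] inner_axis)
    moreover have "axis j1 1 \<bullet> axis j2 (1::real) = 0"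
      using \<open>j1 \<noteq> j2\<close> by (simp add: inner_axis_axis)
    ultimately show "axis j1 1 \<bullet> T1 u = axis j1 1 \<bullet> axis j2 (1::real)"
      by simp
  qed
  then show ?thesis
    using that[of "H \<circ> T1" j1 j2] H T1 \<open>j1 \<noteq> j2\<close> by (simp add: orthogonal_transformation_compose)
qed

lemma orthogonal_transformation_nth_eq_inner:
  assumes "orthogonal_transformation T" and "T w = axis j 1"
  shows "T x $ j = x \<bullet> w"
proof -
  have "T x $ j = T x \<bullet> T w"
    by (simp add: assms(2) inner_axis)
  also have "\<dots> = x \<bullet> w"
    using assms(1) by (simp add: orthogonal_transformation_def)
  finally show ?thesis .
qed

lemma measure_std_gaussian_inner:
  fixes w :: "real^'n::finite"
  assumes "norm w = 1" and [measurable]: "A \<in> sets borel"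
  shows "measure (std_gaussian TYPE('n)) {x. x \<bullet> w \<in> A} = measure std_normal_distribution A"
proof -
  fix j :: 'n
  obtain T where T: "orthogonal_transformation T" "T w = axis j (1::real)"
    using orthogonal_transformation_exists_1[of w "axis j 1"] assms(1) by auto
  have "{x. x \<bullet> w \<in> A} = T -` {y. y $ j \<in> A}"
    using orthogonal_transformation_nth_eq_inner[OF T] by auto
  moreover have "{y :: real^'n. y $ j \<in> A} \<in> sets borel"
    by measurable
  ultimately have "measure (std_gaussian TYPE('n)) {x. x \<bullet> w \<in> A}
      = measure (std_gaussian TYPE('n)) {y. y $ j \<in> A}"
    by (simp only: measure_std_gaussian_vimage_orthogonal_transformation[OF T(1)])
  also have "\<dots> = measure std_normal_distribution A"
    using measure_std_gaussian_coordinates[of "\<lambda>_. A" "{j}"] by simp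
  finally show ?thesis .
qed

lemma measure_std_gaussian_inner_orthonormal_pair:
  fixes w u :: "real^'n::finite"
  assumes "norm w = 1" "norm u = 1" "w \<bullet> u = 0"
    and [measurable]: "A \<in> sets borel" "B \<in> sets borel"
  shows "measure (std_gaussian TYPE('n)) {x. x \<bullet> w \<in> A \<and> x \<bullet> u \<in> B}
      = measure std_normal_distribution A * measure std_normal_distribution B"
proof -
  obtain T and j1 j2 :: 'n
    where T: "orthogonal_transformation T" "T w = axis j1 (1::real)" "T u = axis j2 (1::real)"
      and "j1 \<noteq> j2"
    using orthonormal_pair_to_axes[OF assms(1-3)] .
  define C where "C j = (if j = j1 then A else B)" for j
  have [measurable]: "C j \<in> sets borel" for j
    by (simp add: C_def)
  have "{x. x \<bullet> w \<in> A \<and> x \<bullet> u \<in> B} = T -` {y. \<forall>j\<in>{j1, j2}. y $ j \<in> C j}"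
    using orthogonal_transformation_nth_eq_inner[OF T(1,2)] orthogonal_transformation_nth_eq_inner[OF T(1,3)]
      \<open>j1 \<noteq> j2\<close> by (auto simp: C_def)
  moreover have "{y :: real^'n. \<forall>j\<in>{j1, j2}. y $ j \<in> C j} \<in> sets borel"
    by measurable
  ultimately have "measure (std_gaussian TYPE('n)) {x. x \<bullet> w \<in> A \<and> x \<bullet> u \<in> B}
      = measure (std_gaussian TYPE('n)) {y. \<forall>j\<in>{j1, j2}. y $ j \<in> C j}"
    by (simp only: measure_std_gaussian_vimage_orthogonal_transformation[OF T(1)])
  also have "\<dots> = measure std_normal_distribution A * measure std_normal_distribution B"
    using measure_std_gaussian_coordinates[of C "{j1, j2}"] \<open>j1 \<noteq> j2\<close> by (simp add: C_def)
  finally show ?thesis .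
qed

section \<open>One-dimensional estimates\<close>

lemma std_normal_interval_lower_bound:
  assumes "0 \<le> a" and "a \<le> b"
  shows "(b - a) * std_normal_density b \<le> measure std_normal_distribution {a..b}"
proof -
  interpret N: real_distribution std_normal_distribution
    by (rule real_dist_normal_dist)
  have "ennreal ((b - a) * std_normal_density b)
      = (\<integral>\<^sup>+ x. ennreal (std_normal_density b) * indicator {a..b} x \<partial>lborel)"
    using assms by (simp add: nn_integral_cmult_indicator ennreal_mult' mult.commute)
  also have "\<dots> \<le> (\<integral>\<^sup>+ x. ennreal (std_normal_density x) * indicator {a..b} x \<partial>lborel)"
    using assms
    by (intro nn_integral_mono)
      (auto simp: std_normal_density_def divide_right_mono power_mono split: split_indicator)
  also have "\<dots> = emeasure std_normal_distribution {a..b}"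
    by (simp add: emeasure_density)
  finally show ?thesis
    by (simp add: N.emeasure_eq_measure)
qed

lemma std_normal_density_sqrt_ln:
  assumes "0 < \<gamma>" and "\<gamma> \<le> 1"
  shows "std_normal_density (c * sqrt (ln (1 / \<gamma>))) = \<gamma> powr (c\<^sup>2 / 2) / sqrt (2 * pi)"
proof -
  have "(c * sqrt (ln (1 / \<gamma>)))\<^sup>2 = - c\<^sup>2 * ln \<gamma>"
    using assms by (simp add: power_mult_distrib ln_div)
  then show ?thesis
    using assms by (simp add: std_normal_density_def powr_def)
qed

lemma std_normal_interval_powr_lower_bound:
  fixes \<gamma> t :: real
  assumes "0 < \<gamma>" and "\<gamma> \<le> 1/2" and "2 \<le> t"
  defines "s \<equiv> sqrt (ln (1 / \<gamma>))"
  shows "\<gamma> powr (2 * t\<^sup>2 + 2) \<le> measure std_normal_distribution {t * s .. 2 * (t * s)}"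
proof -
  have "ln 2 \<le> ln (1 / \<gamma>)"
    using assms by (subst ln_le_cancel_iff) (simp_all add: field_simps)
  then have "(1/2)\<^sup>2 \<le> ln (1 / \<gamma>)"
    using ln2_ge_two_thirds by (simp add: power2_eq_square)
  then have "1/2 \<le> s"
    unfolding s_def by (rule real_le_rsqrt)
  then have ts: "1 \<le> t * s"
    using mult_mono[of 2 t "1/2" s] assms by simp
  have sqrt_2pi: "sqrt (2 * pi) \<le> 4"
    using pi_less_4 by (intro real_le_lsqrt) simp_all
  have "\<gamma>\<^sup>2 \<le> (1/2)\<^sup>2"
    using assms by (intro power_mono) simp_all
  also have "\<dots> \<le> t * s / 4"
    using ts by (simp add: power2_eq_square)
  also have "\<dots> \<le> t * s / sqrt (2 * pi)"
    using ts sqrt_2pi by (intro divide_left_mono) simp_all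
  finally have "\<gamma>\<^sup>2 \<le> t * s / sqrt (2 * pi)" .
  have "\<gamma> powr (2 * t\<^sup>2 + 2) = \<gamma> powr (2 * t\<^sup>2) * \<gamma>\<^sup>2"
    using assms by (simp add: powr_add powr_numeral)
  also have "\<dots> \<le> \<gamma> powr (2 * t\<^sup>2) * (t * s / sqrt (2 * pi))"
    using \<open>\<gamma>\<^sup>2 \<le> t * s / sqrt (2 * pi)\<close> by (intro mult_left_mono) simp_all
  also have "\<dots> = (2 * (t * s) - t * s) * std_normal_density (2 * (t * s))"
    using assms std_normal_density_sqrt_ln[of \<gamma> "2 * t"] by (simp add: s_def power_mult_distrib mult.assoc)
  also have "\<dots> \<le> measure std_normal_distribution {t * s .. 2 * (t * s)}"
    using ts by (intro std_normal_interval_lower_bound) (simp_all add: mult.commute)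
  finally show ?thesis .
qed

lemma measure_std_gaussian_slab_ge:
  fixes w :: "real^'n::finite"
  assumes "norm w = 1" and "0 < \<gamma>" and "\<gamma> \<le> 1/2" and "2 \<le> t"
  defines "s \<equiv> sqrt (ln (1 / \<gamma>))"
  shows "\<gamma> powr (2 * t\<^sup>2 + 2)
      \<le> measure (std_gaussian TYPE('n)) {x. x \<bullet> w \<in> {t * s .. 2 * (t * s)}}"
proof -
  have "measure (std_gaussian TYPE('n)) {x. x \<bullet> w \<in> {t * s .. 2 * (t * s)}}
      = measure std_normal_distribution {t * s .. 2 * (t * s)}"
    by (rule measure_std_gaussian_inner[OF assms(1)]) simp
  then show ?thesis
    using std_normal_interval_powr_lower_bound[OF assms(2-4)] by (simp add: s_def)
qed

lemma measure_std_gaussian_two_slabs_ge: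
  fixes w u :: "real^'n::finite"
  assumes "norm w = 1" "norm u = 1" "w \<bullet> u = 0"
    and "0 < \<gamma>" "\<gamma> \<le> 1/2" "2 \<le> t" "2 \<le> t'"
  defines "s \<equiv> sqrt (ln (1 / \<gamma>))"
  shows "\<gamma> powr (2 * t\<^sup>2 + 2 * t'\<^sup>2 + 4)
      \<le> measure (std_gaussian TYPE('n))
          {x. x \<bullet> w \<in> {t * s .. 2 * (t * s)} \<and> x \<bullet> u \<in> {t' * s .. 2 * (t' * s)}}"
proof -
  have "2 * t\<^sup>2 + 2 * t'\<^sup>2 + 4 = (2 * t\<^sup>2 + 2) + (2 * t'\<^sup>2 + 2)"
    by simp
  then have "\<gamma> powr (2 * t\<^sup>2 + 2 * t'\<^sup>2 + 4)
      = \<gamma> powr (2 * t\<^sup>2 + 2) * \<gamma> powr (2 * t'\<^sup>2 + 2)"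
    by (simp only: powr_add)
  also have "\<dots> \<le> measure std_normal_distribution {t * s .. 2 * (t * s)}
      * measure std_normal_distribution {t' * s .. 2 * (t' * s)}"
    using std_normal_interval_powr_lower_bound[OF assms(4,5)] assms(6,7)
    by (intro mult_mono) (simp_all add: s_def)
  also have "\<dots> = measure (std_gaussian TYPE('n))
      {x. x \<bullet> w \<in> {t * s .. 2 * (t * s)} \<and> x \<bullet> u \<in> {t' * s .. 2 * (t' * s)}}"
    by (rule measure_std_gaussian_inner_orthonormal_pair[OF assms(1-3), symmetric]) simp_all
  finally show ?thesis .
qed

theorem lemma5p3:
  fixes V W :: "real^'k^'d" and i :: 'k and \<gamma> R :: real
  assumes "column i W \<noteq> 0" and "0 < \<gamma>" and "\<gamma> \<le> 1/2" and "R \<ge> 2"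
  defines "wh \<equiv> (1 / norm (column i W)) *\<^sub>R column i W"
  defines "u \<equiv> column i V - (column i V \<bullet> wh) *\<^sub>R wh"
  defines "uh \<equiv> (1 / norm u) *\<^sub>R u"
  defines "E \<equiv> {x :: real^'d.
      1 \<le> (x \<bullet> wh) / (R * sqrt (ln (1/\<gamma>))) \<and> (x \<bullet> wh) / (R * sqrt (ln (1/\<gamma>))) \<le> 2 \<and>
      (u \<noteq> 0 \<longrightarrow> 1 \<le> (x \<bullet> uh) / (2 * sqrt (ln (1/\<gamma>))) \<and> (x \<bullet> uh) / (2 * sqrt (ln (1/\<gamma>))) \<le> 2)}"
  shows "measure (std_gaussian TYPE('d)) E \<ge> \<gamma> powr (28 + 6 * R\<^sup>2)"
proof -
  define s where "s = sqrt (ln (1/\<gamma>))"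
  have "0 < s"
    using assms(2,3) by (simp add: s_def)
  then have E: "E = {x. x \<bullet> wh \<in> {R * s .. 2 * (R * s)}
      \<and> (u \<noteq> 0 \<longrightarrow> x \<bullet> uh \<in> {2 * s .. 2 * (2 * s)})}"
    using assms(4) by (auto simp: E_def s_def[symmetric] le_divide_eq divide_le_eq mult.commute)
  have wh: "norm wh = 1"
    using assms(1) by (simp add: wh_def)
  show ?thesis
  proof (cases "u = 0")
    case True
    have "\<gamma> powr (28 + 6 * R\<^sup>2) \<le> \<gamma> powr (2 * R\<^sup>2 + 2)"
      using assms(2,3) by (intro powr_mono') simp_all
    also have "\<dots> \<le> measure (std_gaussian TYPE('d)) {x. x \<bullet> wh \<in> {R * s .. 2 * (R * s)}}"
      unfolding s_def using wh assms(2-4) by (rule measure_std_gaussian_slab_ge)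
    finally show ?thesis
      using True by (simp add: E)
  next
    case False
    have "u \<bullet> wh = 0"
      using wh by (simp add: u_def inner_diff_left norm_eq_1)
    then have uh: "norm uh = 1" "wh \<bullet> uh = 0"
      using False by (simp_all add: uh_def inner_commute)
    have "\<gamma> powr (28 + 6 * R\<^sup>2) \<le> \<gamma> powr (2 * R\<^sup>2 + 2 * 2\<^sup>2 + 4)"
      using assms(2,3) by (intro powr_mono') simp_all
    also have "\<dots> \<le> measure (std_gaussian TYPE('d))
        {x. x \<bullet> wh \<in> {R * s .. 2 * (R * s)} \<and> x \<bullet> uh \<in> {2 * s .. 2 * (2 * s)}}"
      unfolding s_def using wh uh assms(2-4) by (rule measure_std_gaussian_two_slabs_ge) simp
    finally show ?thesis
      using False by (simp add: E)
  qed
qed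

end
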